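(* Let $n$ be a nonzero integer and let $q(t)=n(t+t^{-1})+1-2n$. Then there exist a prime $p$ and integers $m,\ell$ coprime to $p$, such that if $p$ is odd then $p$ is coprime to $1-4m$ and $1-4m$ is a quadratic nonresidue modulo $p$, and such that $q(t)\in S_{p,m,\ell}$, if and only if $1-4n$ is not a perfect square.
   Context: For a prime $p$ and integers $m,\ell$, define the set of Laurent polynomials $$S_{p,m,\ell}=\{m(t+t^{-1})+1-2m\}\cup\{(m+\ell p^{2s+1})(t+t^{-1})+1-2(m+\ell p^{2s+1}) : s\in\mathbb{Z},\ s\geq 0\}.$$ An integer $x$ is a quadratic nonresidue modulo $p$ if $x\not\equiv y^2 \pmod p$ for all integers $y$. A perfect square means $k^2$ for some integer $k$ (so negative integers are not perfect squares). *)

theory Defs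
  imports "HOL-Computational_Algebra.Formal_Laurent_Series" "HOL-Number_Theory.Number_Theory"
begin

definition lpoly :: "int \<Rightarrow> int fls" where
  "lpoly c = fls_const c * (fls_X + fls_X_inv) + fls_const (1 - 2 * c)"

definition S_set :: "nat \<Rightarrow> int \<Rightarrow> int \<Rightarrow> int fls set" where
  "S_set p m l = {lpoly m} \<union> {lpoly (m + l * int p ^ (2 * s + 1)) | s :: nat. True}"

end

theory Submission
  imports Defs "HOL-Computational_Algebra.Nth_Powers"
begin

text \<open>Since lpoly is injective, lpoly n \<in> S_set p m l just says n \<equiv> m (mod p) in a
  prescribed way, and then 1 - 4m \<equiv> 1 - 4n (mod p). So if 1 - 4n is a square, the
  condition fails for odd p (it would make 1 - 4m a residue) and for p = 2 (m, hence n, odd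
  forces 1 - 4n \<equiv> 5 (mod 8)). Conversely, D = 1 - 4n \<equiv> 1 (mod 4) is a non-square, and
  such a D is a non-residue modulo some odd prime p: some prime q divides D to an odd power;
  choose b > 0 odd, a non-residue mod q and \<equiv> 1 modulo the other primes of D. Jacobi
  reciprocity, which for D \<equiv> 1 (mod 4) carries no sign, gives (D|b) = (b|D) = -1, so some
  prime p of b has (D|p) = -1, and p, m = n, l = 1 do the job.\<close>

lemma Legendre_cases: "Legendre a p \<in> {-1, 0, 1}"
  by (simp add: Legendre_def)

lemma Legendre_eq_zero_iff: "Legendre a p = 0 \<longleftrightarrow> p dvd a"
  by (simp add: Legendre_def cong_0_iff)

lemma Legendre_eq_iff_cong:
  fixes p :: int
  assumes "p > 2" "x \<in> {-1, 0, 1}"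
  shows "Legendre a p = x \<longleftrightarrow> [Legendre a p = x] (mod p)"
proof
  assume "[Legendre a p = x] (mod p)"
  then have "p dvd Legendre a p - x" by (simp add: cong_iff_dvd_diff)
  moreover have "\<bar>Legendre a p - x\<bar> < p" using assms Legendre_cases[of a p] by auto
  ultimately show "Legendre a p = x" using zdvd_imp_le[of p "\<bar>Legendre a p - x\<bar>"] by auto
qed simp

lemma euler_criterion_int:
  fixes p :: int
  assumes "prime p" "p > 2"
  shows "[Legendre a p = a ^ nat ((p - 1) div 2)] (mod p)"
proof -
  have p: "int (nat p) = p" using assms by simp
  then have "prime (nat p)" using assms(1) by (metis prime_int_nat_transfer)
  moreover have "2 < nat p" using assms(2) by simp
  ultimately have "[Legendre a (int (nat p)) = a ^ ((nat p - 1) div 2)] (mod int (nat p))"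
    by (rule euler_criterion)
  moreover have "(nat p - 1) div 2 = nat ((p - 1) div 2)"
    using assms by (simp add: nat_div_distrib nat_diff_distrib)
  ultimately show ?thesis using p by simp
qed

lemma Legendre_mult:
  fixes p :: int
  assumes "prime p" "p > 2"
  shows "Legendre (a * b) p = Legendre a p * Legendre b p"
proof -
  let ?k = "nat ((p - 1) div 2)"
  have "[Legendre (a * b) p = a ^ ?k * b ^ ?k] (mod p)"
    using euler_criterion_int[OF assms, of "a * b"] by (simp add: power_mult_distrib)
  also have "[a ^ ?k * b ^ ?k = Legendre a p * Legendre b p] (mod p)"
    using euler_criterion_int[OF assms] by (intro cong_mult) (auto intro: cong_sym)
  finally have "[Legendre (a * b) p = Legendre a p * Legendre b p] (mod p)" .
  moreover have "Legendre a p * Legendre b p \<in> {-1, 0, 1}"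
    using Legendre_cases[of a p] Legendre_cases[of b p] by auto
  ultimately show ?thesis using Legendre_eq_iff_cong[OF assms(2)] by blast
qed

lemma Legendre_minus_one:
  fixes p :: int
  assumes "prime p" "p > 2"
  shows "Legendre (-1) p = (if p mod 4 = 1 then 1 else -1)"
proof -
  have "odd p" using assms prime_odd_int by blast
  then have "even (nat ((p - 1) div 2)) \<longleftrightarrow> p mod 4 = 1"
    using assms by (simp add: even_nat_iff) presburger
  then have "(-1::int) ^ nat ((p - 1) div 2) = (if p mod 4 = 1 then 1 else -1)"
    by simp
  then show ?thesis
    using euler_criterion_int[OF assms, of "-1"] Legendre_eq_iff_cong[OF assms(2)] by auto
qed

lemma QuadRes_cong: "[a = b] (mod p) \<Longrightarrow> QuadRes p a \<longleftrightarrow> QuadRes p b"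
  unfolding QuadRes_def by (meson cong_sym cong_trans)

lemma Legendre_cong: "[a = b] (mod p) \<Longrightarrow> Legendre a p = Legendre b p"
  unfolding Legendre_def using QuadRes_cong[of a b p] by (simp add: cong_def)

lemma Legendre_one: "p > 1 \<Longrightarrow> Legendre 1 p = 1"
  unfolding Legendre_def QuadRes_def by (auto simp: cong_def intro: exI[of _ 1])

lemma low_square_root_mod_prime:
  fixes q y :: int
  assumes "prime q" "odd q" "\<not> q dvd y"
  obtains z where "z \<in> {1..(q - 1) div 2}" "[z^2 = y^2] (mod q)"
proof -
  define r where "r = y mod q"
  have "q > 0" using assms(1) prime_gt_0_int by blast
  then have "0 \<le> r" "r < q" by (simp_all add: r_def)
  moreover have "r \<noteq> 0" using assms(3) by (simp add: r_def dvd_eq_mod_eq_0)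
  ultimately have r: "0 < r" "r < q" by simp_all
  have "[r^2 = y^2] (mod q)" unfolding r_def by (simp add: cong_def power_mod)
  moreover have "[(q - r)^2 = r^2] (mod q)"
    by (simp add: cong_iff_dvd_diff power2_eq_square algebra_simps)
  ultimately have "[(q - r)^2 = y^2] (mod q)" by (rule cong_trans[rotated])
  show thesis
  proof (cases "r \<le> (q - 1) div 2")
    case True
    then show thesis using that[of r] r \<open>[r^2 = y^2] (mod q)\<close> by auto
  next
    case False
    then have "q - r \<in> {1..(q - 1) div 2}" using r assms(2) by auto presburger
    then show thesis using that \<open>[(q - r)^2 = y^2] (mod q)\<close> by blast
  qed
qed

lemma exists_quadratic_nonresidue:
  fixes q :: int
  assumes "prime q" "q > 2"
  obtains r where "Legendre r q = -1"
proof -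
  let ?h = "(q - 1) div 2"
  have "card ((\<lambda>z. z^2 mod q) ` {1..?h}) \<le> card {1..?h}" by (rule card_image_le) simp
  also have "\<dots> < card {1..q - 1}" using assms by simp
  finally have "\<not> {1..q - 1} \<subseteq> (\<lambda>z. z^2 mod q) ` {1..?h}"
    using card_mono[of "(\<lambda>z. z^2 mod q) ` {1..?h}" "{1..q - 1}"] by auto
  then obtain r where r: "r \<in> {1..q - 1}" "r \<notin> (\<lambda>z. z^2 mod q) ` {1..?h}" by blast
  then have "\<not> q dvd r" using zdvd_imp_le[of q r] by auto
  have "\<not> QuadRes q r"
  proof
    assume "QuadRes q r"
    then obtain y where y: "[y^2 = r] (mod q)" unfolding QuadRes_def by blast
    have "\<not> q dvd y"
    proof
      assume "q dvd y"
      then have "q dvd y^2" by (simp add: power2_eq_square)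
      then show False using cong_dvd_iff[OF y] \<open>\<not> q dvd r\<close> by blast
    qed
    then obtain z where z: "z \<in> {1..?h}" "[z^2 = y^2] (mod q)"
      using low_square_root_mod_prime assms prime_odd_int by blast
    then have "z^2 mod q = r" using y r by (auto simp: cong_def)
    then show False using z r by blast
  qed
  then show thesis using that[of r] \<open>\<not> q dvd r\<close> by (simp add: Legendre_def cong_0_iff)
qed

lemma Legendre_reciprocity:
  fixes p q :: int
  assumes "prime p" "p > 2" "prime q" "q > 2" "p \<noteq> q"
  shows "Legendre p q * Legendre q p = (if p mod 4 = 3 \<and> q mod 4 = 3 then -1 else 1)"
proof -
  have "odd p" "odd q" using assms prime_odd_int by blast+
  then have "p mod 4 = 3 \<longleftrightarrow> odd ((p - 1) div 2)" "q mod 4 = 3 \<longleftrightarrow> odd ((q - 1) div 2)"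
    by presburger+
  moreover have "(p - 1) div 2 * ((q - 1) div 2) \<ge> 0" using assms by simp
  ultimately have
    "even (nat ((p - 1) div 2 * ((q - 1) div 2))) \<longleftrightarrow> \<not> (p mod 4 = 3 \<and> q mod 4 = 3)"
    by (simp add: even_nat_iff)
  moreover have "Legendre p q * Legendre q p = (-1) ^ nat ((p - 1) div 2 * ((q - 1) div 2))"
    using assms by (intro Quadratic_Reciprocity_int) auto
  ultimately show ?thesis by simp
qed

text \<open>For odd q this is q* = (-1)^((q-1)/2) q, the form in which quadratic reciprocity
  carries no sign: (q*|p) = (p|q).\<close>

definition qr_star :: "int \<Rightarrow> int" where
  "qr_star x = (if x mod 4 = 1 then x else - x)"

lemma Legendre_qr_star:
  fixes p q :: int
  assumes "prime p" "p > 2" "prime q" "q > 2"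
  shows "Legendre (qr_star q) p = Legendre p q"
proof (cases "p = q")
  case True
  then show ?thesis by (simp add: qr_star_def Legendre_def cong_0_iff)
next
  case False
  have "odd p" "odd q" using assms prime_odd_int by blast+
  then have p4: "p mod 4 = 3 \<longleftrightarrow> p mod 4 \<noteq> 1" and q4: "q mod 4 = 3 \<longleftrightarrow> q mod 4 \<noteq> 1"
    by presburger+
  have "\<not> q dvd p" using False assms primes_dvd_imp_eq by blast
  then have L: "Legendre p q \<in> {-1, 1}"
    using Legendre_cases[of p q] by (auto simp: Legendre_eq_zero_iff)
  then have rec: "Legendre q p = Legendre p q * (if p mod 4 = 3 \<and> q mod 4 = 3 then -1 else 1)"
    using Legendre_reciprocity[OF assms False] by auto
  show ?thesis
  proof (cases "q mod 4 = 1")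
    case True
    then show ?thesis using rec q4 by (simp add: qr_star_def)
  next
    case False
    then have "Legendre (qr_star q) p = Legendre (-1) p * Legendre q p"
      using Legendre_mult[OF assms(1,2), of "-1" q] by (simp add: qr_star_def)
    then show ?thesis using rec L False q4 p4 Legendre_minus_one[OF assms(1,2)] by auto
  qed
qed

lemma qr_star_mult:
  fixes x y :: int
  assumes "odd x" "odd y"
  shows "qr_star (x * y) = qr_star x * qr_star y"
proof -
  have "x mod 4 = 1 \<or> x mod 4 = 3" "y mod 4 = 1 \<or> y mod 4 = 3" using assms by presburger+
  moreover have "(x * y) mod 4 = ((x mod 4) * (y mod 4)) mod 4" by (simp add: mod_mult_eq)
  ultimately show ?thesis by (auto simp: qr_star_def)
qed

lemma qr_star_prod_mset:
  assumes "\<forall>x\<in>#M. odd (x::int)"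
  shows "qr_star (prod_mset M) = (\<Prod>x\<in>#M. qr_star x)"
  using assms
proof (induction M)
  case (add x M)
  have "odd (prod_mset M)" using add.prems by (induction M) auto
  then show ?case using add by (simp add: qr_star_mult)
qed (simp add: qr_star_def)

lemma prod_mset_pos:
  fixes M :: "'a :: linordered_semidom multiset"
  shows "(\<And>x. x \<in># M \<Longrightarrow> 0 < x) \<Longrightarrow> 0 < prod_mset M"
  by (induction M) auto

lemma prod_mset_image_nonneg:
  fixes f :: "'a \<Rightarrow> 'b :: linordered_semidom"
  shows "(\<And>x. x \<in># M \<Longrightarrow> 0 \<le> f x) \<Longrightarrow> 0 \<le> (\<Prod>x\<in>#M. f x)"
  by (induction M) auto

lemma prod_mset_image_eq_power_count:
  assumes "\<And>x. x \<in># M \<Longrightarrow> x \<noteq> a \<Longrightarrow> f x = 1"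
  shows "(\<Prod>x\<in>#M. f x) = f a ^ count M a"
  using assms by (induction M) auto

lemma Legendre_prod_mset:
  fixes p :: int
  assumes "prime p" "p > 2"
  shows "Legendre (\<Prod>x\<in>#M. f x) p = (\<Prod>x\<in>#M. Legendre (f x) p)"
  using assms by (induction M) (simp_all add: Legendre_one Legendre_mult)

lemma prime_factor_of_odd:
  fixes x p :: int
  assumes "odd x" "p \<in># prime_factorization x"
  shows "prime p" "p > 2"
proof -
  show "prime p" using assms(2) by auto
  moreover have "odd p" using assms in_prime_factors_imp_dvd dvd_trans by blast
  ultimately show "p > 2" using prime_ge_2_int[of p] by presburger
qed

text \<open>The two sides are the Jacobi symbols (D|b) and (b|D).\<close>

lemma Jacobi_reciprocity_1_mod_4:
  fixes D b :: int
  assumes "D mod 4 = 1" "odd b" "b > 0"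
  shows "(\<Prod>p\<in>#prime_factorization b. Legendre D p) =
         (\<Prod>q\<in>#prime_factorization D. Legendre b q)"
proof -
  define P Q where "P = prime_factorization b" and "Q = prime_factorization D"
  have "odd D" using assms(1) by presburger
  have P: "prime p" "p > 2" if "p \<in># P" for p
    using prime_factor_of_odd[OF assms(2)] that P_def by auto
  have Q: "prime q" "q > 2" if "q \<in># Q" for q
    using prime_factor_of_odd[OF \<open>odd D\<close>] that Q_def by auto
  have "D = qr_star \<bar>D\<bar>" using assms(1) by (simp add: qr_star_def) presburger
  also have "\<bar>D\<bar> = prod_mset Q"
    using prod_mset_prime_factorization[of D] \<open>odd D\<close> Q_def by fastforce
  also have "qr_star (prod_mset Q) = (\<Prod>q\<in>#Q. qr_star q)"
    using Q prime_odd_int by (intro qr_star_prod_mset) blast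
  finally have D: "D = (\<Prod>q\<in>#Q. qr_star q)" .
  have "(\<Prod>p\<in>#P. Legendre D p) = (\<Prod>p\<in>#P. \<Prod>q\<in>#Q. Legendre (qr_star q) p)"
    unfolding D using P
    by (intro arg_cong[where f = prod_mset] image_mset_cong Legendre_prod_mset)
  also have "\<dots> = (\<Prod>p\<in>#P. \<Prod>q\<in>#Q. Legendre p q)"
    using P Q by (intro arg_cong[where f = prod_mset] image_mset_cong Legendre_qr_star)
  also have "\<dots> = (\<Prod>q\<in>#Q. \<Prod>p\<in>#P. Legendre p q)" by (rule prod_mset.swap)
  also have "\<dots> = (\<Prod>q\<in>#Q. Legendre (\<Prod>p\<in>#P. p) q)"
    using Q
    by (intro arg_cong[where f = prod_mset] image_mset_cong Legendre_prod_mset[symmetric])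
  also have "(\<Prod>p\<in>#P. p) = b"
    using assms(3) prod_mset_prime_factorization[of b] P_def by simp
  finally show ?thesis unfolding P_def Q_def .
qed

lemma square_mod_8: "(k::int)^2 mod 8 \<in> {0, 1, 4}"
proof -
  have "k^2 mod 8 = (k mod 8)^2 mod 8" by (simp add: power_mod)
  moreover have "k mod 8 \<in> {0, 1, 2, 3, 4, 5, 6, 7}" by auto
  ultimately show ?thesis by (auto simp: power2_eq_square)
qed

lemma nonsquare_abs_of_1_mod_4:
  fixes D :: int
  assumes "D mod 4 = 1" "\<not> (\<exists>k. D = k^2)"
  shows "\<not> is_square \<bar>D\<bar>"
proof
  assume "is_square \<bar>D\<bar>"
  then obtain k where "\<bar>D\<bar> = k^2" by (auto elim: is_nth_powerE)
  then have "D = - (k^2)" using assms(2) by (auto simp: abs_if split: if_splits)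
  moreover have "k^2 mod 8 = 0 \<or> k^2 mod 8 = 1 \<or> k^2 mod 8 = 4"
    using square_mod_8[of k] by simp
  moreover have "\<forall>t::int. t mod 8 = 0 \<or> t mod 8 = 1 \<or> t mod 8 = 4 \<longrightarrow> (- t) mod 4 \<noteq> 1"
    by presburger
  ultimately show False using assms(1) by metis
qed

lemma exists_prime_odd_multiplicity:
  fixes a :: int
  assumes "\<not> is_square \<bar>a\<bar>"
  obtains q where "q \<in># prime_factorization a" "odd (count (prime_factorization a) q)"
proof -
  obtain q where "prime q" "odd (multiplicity q a)"
    using assms is_nth_power_conv_multiplicity[of 2 a] by auto
  moreover from this have "q \<in># prime_factorization a"
    by (metis count_eq_zero_iff count_prime_factorization_prime even_zero)
  ultimately show thesis using that[of q] by (simp add: count_prime_factorization_prime)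
qed

lemma exists_odd_nonresidue_cong_one:
  fixes q c :: int
  assumes "prime q" "q > 2" "c > 0" "\<not> q dvd c"
  obtains b where "b > 0" "odd b" "Legendre b q = -1" "[b = 1] (mod c)"
proof -
  obtain r where r: "Legendre r q = -1" using exists_quadratic_nonresidue assms by blast
  have "\<not> q dvd 2" using assms zdvd_imp_le[of q 2] by auto
  then have "\<not> q dvd 2 * c" using assms prime_dvd_mult_iff by blast
  then have "coprime (2 * c) q" using assms(1) prime_imp_coprime coprime_commute by blast
  then obtain x where x: "[x = 1] (mod 2 * c)" "[x = r] (mod q)"
    using binary_chinese_remainder_int by blast
  define b where "b = x mod (2 * c * q)"
  have "[b = x] (mod 2 * c * q)" by (simp add: b_def cong_def)
  then have b1: "[b = 1] (mod 2 * c)" and br: "[b = r] (mod q)"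
    using x by (meson cong_dvd_modulus cong_trans dvd_triv_left dvd_triv_right)+
  have "odd b" using cong_dvd_modulus[OF b1, of 2] by (auto simp: cong_def)
  moreover have "b \<ge> 0" using assms by (simp add: b_def prime_gt_0_int)
  ultimately have "b > 0" by (cases "b = 0") auto
  moreover have "Legendre b q = -1" using Legendre_cong[OF br] r by simp
  moreover have "[b = 1] (mod c)" using cong_dvd_modulus[OF b1] by simp
  ultimately show thesis using that \<open>odd b\<close> by blast
qed

lemma exists_prime_Legendre_minus_one:
  fixes D :: int
  assumes "D mod 4 = 1" "\<not> (\<exists>k. D = k^2)"
  obtains p where "prime p" "p > 2" "Legendre D p = -1"
proof -
  define Q where "Q = prime_factorization D"
  obtain q where q: "q \<in># Q" "odd (count Q q)"
    using exists_prime_odd_multiplicity[OF nonsquare_abs_of_1_mod_4[OF assms]] Q_def by blast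
  have "odd D" using assms(1) by presburger
  then have Q_primes: "prime x" "x > 2" if "x \<in># Q" for x
    using prime_factor_of_odd that Q_def by auto
  define c where "c = prod_mset {#x \<in># Q. x \<noteq> q#}"
  have "c > 0" unfolding c_def using Q_primes(2)
    by (intro prod_mset_pos) (auto dest: less_trans[OF zero_less_numeral])
  moreover have "\<not> q dvd c"
    unfolding c_def using Q_primes(1) q(1) by (subst prime_dvd_prod_mset_primes_iff) simp_all
  ultimately obtain b where b: "b > 0" "odd b" "Legendre b q = -1" "[b = 1] (mod c)"
    using exists_odd_nonresidue_cong_one Q_primes q(1) by blast
  have "Legendre b x = 1" if "x \<in># Q" "x \<noteq> q" for x
  proof -
    have "x dvd c" using that by (simp add: c_def dvd_prod_mset)
    then have "Legendre b x = Legendre 1 x"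
      using b(4) cong_dvd_modulus Legendre_cong by blast
    then show ?thesis using Legendre_one Q_primes(2)[OF that(1)] by simp
  qed
  then have "(\<Prod>x\<in>#Q. Legendre b x) = Legendre b q ^ count Q q"
    by (rule prod_mset_image_eq_power_count)
  also have "\<dots> = -1" using b(3) q(2) by simp
  finally have "(\<Prod>x\<in>#Q. Legendre b x) = -1" .
  then have "(\<Prod>p\<in>#prime_factorization b. Legendre D p) < 0"
    using Jacobi_reciprocity_1_mod_4[OF assms(1) b(2,1)] Q_def by simp
  then obtain p where "p \<in># prime_factorization b" "\<not> 0 \<le> Legendre D p"
    using prod_mset_image_nonneg[of "prime_factorization b" "Legendre D"] by fastforce
  then show thesis using that prime_factor_of_odd[OF b(2)] Legendre_cases[of D p] by auto
qed

lemma lpoly_nth_1: "fls_nth (lpoly c) 1 = c"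
  by (simp add: lpoly_def)

lemma lpoly_eq_iff: "lpoly x = lpoly y \<longleftrightarrow> x = y"
  by (metis lpoly_nth_1)

lemma lpoly_in_S_set_iff:
  "lpoly n \<in> S_set p m l \<longleftrightarrow> n = m \<or> (\<exists>s. n = m + l * int p ^ (2 * s + 1))"
  by (auto simp: S_set_def lpoly_eq_iff)

lemma cong_of_lpoly_in_S_set:
  assumes "lpoly n \<in> S_set p m l"
  shows "[n = m] (mod int p)"
  using assms by (auto simp: lpoly_in_S_set_iff cong_iff_dvd_diff)

lemma one_minus_four_odd_not_square:
  fixes n k :: int
  assumes "odd n"
  shows "1 - 4 * n \<noteq> k^2"
proof -
  have "(1 - 4 * n) mod 8 = 5" using assms by presburger
  then show ?thesis using square_mod_8[of k] by auto
qed

lemma nonsquare_of_S_set_condition: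
  fixes n m l :: int and p :: nat
  assumes "prime p" "coprime m (int p)"
    and "odd p \<longrightarrow> coprime (int p) (1 - 4 * m) \<and> \<not> QuadRes (int p) (1 - 4 * m)"
    and "lpoly n \<in> S_set p m l"
  shows "\<not> (\<exists>k. 1 - 4 * n = k^2)"
proof
  assume "\<exists>k. 1 - 4 * n = k^2"
  then obtain k where k: "1 - 4 * n = k^2" by blast
  have nm: "[n = m] (mod int p)" using assms(4) by (rule cong_of_lpoly_in_S_set)
  show False
  proof (cases "odd p")
    case True
    have "[k^2 = 1 - 4 * m] (mod int p)"
      unfolding k[symmetric] using nm by (intro cong_diff cong_mult) auto
    then show False using True assms(3) by (auto simp: QuadRes_def)
  next
    case False
    then have "p = 2" using assms(1) prime_ge_2_nat[of p] prime_odd_nat[of p] by force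
    then have "odd n" using nm assms(2) by (auto simp: cong_def)
    then show False using k one_minus_four_odd_not_square by blast
  qed
qed

lemma S_set_condition_of_nonsquare:
  fixes n :: int
  assumes "\<not> (\<exists>k. 1 - 4 * n = k^2)"
  shows "\<exists>(p::nat) (m::int) (l::int). prime p \<and> coprime m (int p) \<and> coprime l (int p) \<and>
            (odd p \<longrightarrow> coprime (int p) (1 - 4 * m) \<and> \<not> QuadRes (int p) (1 - 4 * m)) \<and>
            lpoly n \<in> S_set p m l"
proof -
  have "(1 - 4 * n) mod 4 = 1" by presburger
  then obtain q where q: "prime q" "q > 2" "Legendre (1 - 4 * n) q = -1"
    using exists_prime_Legendre_minus_one assms by blast
  have "\<not> q dvd n"
  proof
    assume "q dvd n"
    then have "Legendre (1 - 4 * n) q = Legendre 1 q"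
      by (intro Legendre_cong) (simp add: cong_iff_dvd_diff)
    then show False using q Legendre_one[of q] by simp
  qed
  have "\<not> q dvd 1 - 4 * n" using q(3) by (auto simp: Legendre_eq_zero_iff[symmetric])
  have "coprime n q"
    using \<open>\<not> q dvd n\<close> prime_imp_coprime[OF q(1)] coprime_commute by blast
  moreover have "coprime q (1 - 4 * n)"
    using \<open>\<not> q dvd 1 - 4 * n\<close> prime_imp_coprime[OF q(1)] by blast
  moreover have "\<not> QuadRes q (1 - 4 * n)"
    using q(3) by (auto simp: Legendre_def split: if_splits)
  moreover have q_nat: "int (nat q) = q" using q(2) by simp
  moreover have "prime (nat q)" using q(1) q_nat by (metis prime_int_nat_transfer)
  moreover have "lpoly n \<in> S_set (nat q) n 1" by (simp add: lpoly_in_S_set_iff)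
  ultimately show ?thesis by (intro exI[of _ "nat q"] exI[of _ n] exI[of _ 1]) simp
qed

theorem mainTheorem4:
  fixes n :: int
  assumes "n \<noteq> 0"
  shows "(\<exists>(p::nat) (m::int) (l::int). prime p \<and> coprime m (int p) \<and> coprime l (int p) \<and>
            (odd p \<longrightarrow> coprime (int p) (1 - 4 * m) \<and> \<not> QuadRes (int p) (1 - 4 * m)) \<and>
            lpoly n \<in> S_set p m l)
         \<longleftrightarrow> \<not> (\<exists>k::int. 1 - 4 * n = k ^ 2)"
  using nonsquare_of_S_set_condition S_set_condition_of_nonsquare by blast

end
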